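(* Let $L = \{(ay+b,y,\tfrac{1}{2}by+c) : y \in \mathbb{R}\}$ with $a,b,c \in \mathbb{R}$ be a horizontal line. Write $q_{L}(y) := \tfrac{1}{2}ay^{2} + by + c$ and $\mathcal{Q}_{L}(y) := (y,q_{L}(y)) \in \mathbb{W}$. Then there is an absolute constant $C$ such that for every $p = (x,y,t) \in \mathbb{H}$, $$\max\{d_{\mathrm{par}}(\Pi(p),\mathcal{Q}_{L}(y)),\ |x - \dot{q}_{L}(y)|\} \leq C(1+|a|)\operatorname{dist}(p,L).$$
   Context: $\mathbb{H}$ is $\mathbb{R}^{3}$ with group law $(x_{1},y_{1},t_{1}) \cdot (x_{2},y_{2},t_{2}) = (x_{1}+x_{2},y_{1}+y_{2},t_{1}+t_{2}+\tfrac{1}{2}(x_{1}y_{2}-x_{2}y_{1}))$ and metric $d(p,q) = \|q^{-1}\cdot p\|$ with $\|(x,y,t)\| = \max\{\sqrt{x^{2}+y^{2}},\sqrt{|t|}\}$; $\operatorname{dist}$ is w.r.t. $d$. $\mathbb{W}$ is $\mathbb{R}^{2}$ with $d_{\mathrm{par}}((y,t),(\xi,\tau)) = \max\{|y-\xi|,|t-\tau|^{1/2}\}$, and $\Pi(x,y,t) := (y,t+\tfrac{1}{2}xy) \in \mathbb{W}$ is the vertical projection. $\dot{q}_{L}$ denotes the derivative of $q_{L}$. *)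

theory Defs
  imports "HOL-Analysis.Analysis"
begin

type_synonym heis = "real \<times> real \<times> real"

definition hmult :: "heis \<Rightarrow> heis \<Rightarrow> heis" where
  "hmult p q = (case p of (x1,y1,t1) \<Rightarrow> case q of (x2,y2,t2) \<Rightarrow>
     (x1+x2, y1+y2, t1+t2+(1/2)*(x1*y2 - x2*y1)))"

definition hinv :: "heis \<Rightarrow> heis" where
  "hinv p = (case p of (x,y,t) \<Rightarrow> (-x,-y,-t))"

definition hnorm :: "heis \<Rightarrow> real" where
  "hnorm p = (case p of (x,y,t) \<Rightarrow> max (sqrt (x^2+y^2)) (sqrt \<bar>t\<bar>))"

definition hdist :: "heis \<Rightarrow> heis \<Rightarrow> real" where
  "hdist p q = hnorm (hmult (hinv q) p)"

definition hdist_set :: "heis \<Rightarrow> heis set \<Rightarrow> real" where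
  "hdist_set p A = (INF q\<in>A. hdist p q)"

definition dpar :: "real \<times> real \<Rightarrow> real \<times> real \<Rightarrow> real" where
  "dpar w v = (case w of (y,t) \<Rightarrow> case v of (\<xi>,\<tau>) \<Rightarrow> max \<bar>y-\<xi>\<bar> (sqrt \<bar>t-\<tau>\<bar>))"

definition vproj :: "heis \<Rightarrow> real \<times> real" where
  "vproj p = (case p of (x,y,t) \<Rightarrow> (y, t + (1/2)*x*y))"

definition hline :: "real \<Rightarrow> real \<Rightarrow> real \<Rightarrow> heis set" where
  "hline a b c = (\<lambda>u. (a*u+b, u, (1/2)*b*u + c)) ` UNIV"

definition qL :: "real \<Rightarrow> real \<Rightarrow> real \<Rightarrow> real \<Rightarrow> real" where
  "qL a b c y = (1/2)*a*y^2 + b*y + c"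

definition QL :: "real \<Rightarrow> real \<Rightarrow> real \<Rightarrow> real \<Rightarrow> real \<times> real" where
  "QL a b c y = (y, qL a b c y)"

end

theory Submission
  imports Defs
begin

text \<open>Let \<open>q = (a u + b, u, b u/2 + c)\<close> be a point of \<open>L\<close> and \<open>(X, S, T) = q\<inverse> p\<close>, so that
  \<open>|X|, |S| \<le> r\<close> and \<open>|T| \<le> r\<^sup>2\<close> for \<open>r = d(p, q)\<close>. The horizontal defect
  \<open>D = x - q\<^sub>L'(y)\<close> equals \<open>X - a S\<close>, and the vertical defect \<open>t + x y/2 - q\<^sub>L(y)\<close>
  equals \<open>T + S D/2\<close>; hence they are bounded by \<open>(1 + |a|) r\<close> and \<open>(1 + (1 + |a|)/2) r\<^sup>2\<close>.
  Taking the infimum over \<open>q \<in> L\<close> gives the claim with \<open>C = 2\<close>.\<close>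

lemma deriv_qL: "deriv (qL a b c) y = a * y + b"
proof -
  have "((\<lambda>y. (1/2) * a * y^2 + b * y + c) has_real_derivative a * y + b) (at y)"
    by (auto intro!: derivative_eq_intros simp: algebra_simps)
  then show ?thesis
    unfolding qL_def [abs_def] by (rule DERIV_imp_deriv)
qed

lemma dpar_vproj_QL:
  "dpar (vproj (x, y, t)) (QL a b c y) = sqrt \<bar>t + x * y / 2 - qL a b c y\<bar>"
  unfolding dpar_def vproj_def QL_def by simp

lemma hdist_coords:
  "hdist (x, y, t) (x', y', t') = hnorm (x - x', y - y', t - t' + (x * y' - x' * y) / 2)"
  unfolding hdist_def hmult_def hinv_def by (simp add: algebra_simps diff_divide_distrib add_divide_distrib)

lemma hnorm_nonneg: "0 \<le> hnorm p"
  unfolding hnorm_def by (auto split: prod.split simp: le_max_iff_disj)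

lemma hdist_nonneg: "0 \<le> hdist p q"
  unfolding hdist_def by (rule hnorm_nonneg)

lemma abs_fst_le_hnorm: "\<bar>x\<bar> \<le> hnorm (x, y, t)"
proof -
  have "sqrt (x^2) \<le> sqrt (x^2 + y^2)" by simp
  then show ?thesis unfolding hnorm_def prod.case real_sqrt_abs by (rule max.coboundedI1)
qed

lemma abs_snd_le_hnorm: "\<bar>y\<bar> \<le> hnorm (x, y, t)"
proof -
  have "sqrt (y^2) \<le> sqrt (x^2 + y^2)" by simp
  then show ?thesis unfolding hnorm_def prod.case real_sqrt_abs by (rule max.coboundedI1)
qed

lemma abs_height_le_hnorm_sq: "\<bar>t\<bar> \<le> (hnorm (x, y, t))^2"
proof -
  have "sqrt \<bar>t\<bar> \<le> hnorm (x, y, t)" unfolding hnorm_def by simp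
  then have "(sqrt \<bar>t\<bar>)^2 \<le> (hnorm (x, y, t))^2" by (rule power_mono) simp
  then show ?thesis by simp
qed

lemma horizontal_defect_le_hdist_line_point:
  "\<bar>x - (a * y + b)\<bar> \<le> (1 + \<bar>a\<bar>) * hdist (x, y, t) (a * u + b, u, (1/2) * b * u + c)"
  (is "_ \<le> _ * ?r")
proof -
  define X S T where "X = x - (a * u + b)" and "S = y - u"
    and "T = t - ((1/2) * b * u + c) + (x * u - (a * u + b) * y) / 2"
  have r: "?r = hnorm (X, S, T)"
    unfolding hdist_coords X_def S_def T_def ..
  have "\<bar>x - (a * y + b)\<bar> = \<bar>X - a * S\<bar>"
    unfolding X_def S_def by (simp add: algebra_simps)
  also have "\<dots> \<le> \<bar>X\<bar> + \<bar>a\<bar> * \<bar>S\<bar>"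
    by (simp add: abs_mult [symmetric] abs_triangle_ineq4)
  also have "\<dots> \<le> ?r + \<bar>a\<bar> * ?r"
    unfolding r by (intro add_mono mult_left_mono abs_fst_le_hnorm abs_snd_le_hnorm) simp
  finally show ?thesis by (simp add: algebra_simps)
qed

lemma vertical_defect_le_hdist_line_point:
  "sqrt \<bar>t + x * y / 2 - qL a b c y\<bar> \<le> 2 * (1 + \<bar>a\<bar>) * hdist (x, y, t) (a * u + b, u, (1/2) * b * u + c)"
  (is "_ \<le> _ * ?r")
proof -
  define D S T where "D = x - (a * y + b)" and "S = y - u"
    and "T = t - ((1/2) * b * u + c) + (x * u - (a * u + b) * y) / 2"
  have r: "?r = hnorm (x - (a * u + b), S, T)"
    unfolding hdist_coords S_def T_def ..
  have r_nonneg: "0 \<le> ?r" by (rule hdist_nonneg)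
  have D: "\<bar>D\<bar> \<le> (1 + \<bar>a\<bar>) * ?r"
    unfolding D_def by (rule horizontal_defect_le_hdist_line_point)
  have "t + x * y / 2 - qL a b c y = T + S * D / 2"
    unfolding qL_def T_def S_def D_def by (simp add: field_simps power2_eq_square)
  then have "\<bar>t + x * y / 2 - qL a b c y\<bar> = \<bar>T + S * D / 2\<bar>" by (rule arg_cong)
  also have "\<dots> \<le> \<bar>T\<bar> + \<bar>S\<bar> * \<bar>D\<bar> / 2"
    using abs_triangle_ineq [of T "S * D / 2"] by (simp add: abs_mult)
  also have "\<dots> \<le> ?r^2 + ?r * ((1 + \<bar>a\<bar>) * ?r) / 2"
    unfolding r
    by (intro add_mono divide_right_mono mult_mono abs_height_le_hnorm_sq abs_snd_le_hnorm)
      (use D r hnorm_nonneg in auto)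
  also have "\<dots> \<le> (2 * (1 + \<bar>a\<bar>) * ?r)^2"
    using r_nonneg by (simp add: power2_eq_square field_simps mult_right_mono)
  finally show ?thesis
    using r_nonneg by (intro real_le_lsqrt) auto
qed

lemma defects_le_hdist_line_point:
  assumes "q \<in> hline a b c"
  shows "max (dpar (vproj (x, y, t)) (QL a b c y)) \<bar>x - deriv (qL a b c) y\<bar>
           \<le> 2 * (1 + \<bar>a\<bar>) * hdist (x, y, t) q"
proof -
  obtain u where q: "q = (a * u + b, u, (1/2) * b * u + c)"
    using assms unfolding hline_def by blast
  have "\<bar>x - (a * y + b)\<bar> \<le> (1 + \<bar>a\<bar>) * hdist (x, y, t) q"
    unfolding q by (rule horizontal_defect_le_hdist_line_point)
  also have "\<dots> \<le> 2 * (1 + \<bar>a\<bar>) * hdist (x, y, t) q"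
    using hdist_nonneg by (simp add: mult_right_mono)
  finally have "\<bar>x - (a * y + b)\<bar> \<le> 2 * (1 + \<bar>a\<bar>) * hdist (x, y, t) q" .
  then show ?thesis
    unfolding dpar_vproj_QL deriv_qL q using vertical_defect_le_hdist_line_point by simp
qed

theorem lemma4p16:
  shows "\<exists>C::real. \<forall>a b c x y t.
     max (dpar (vproj (x,y,t)) (QL a b c y)) \<bar>x - deriv (qL a b c) y\<bar>
       \<le> C * (1 + \<bar>a\<bar>) * hdist_set (x,y,t) (hline a b c)"
proof (intro exI allI)
  fix a b c x y t :: real
  let ?defects = "max (dpar (vproj (x,y,t)) (QL a b c y)) \<bar>x - deriv (qL a b c) y\<bar>"
  have K: "2 * (1 + \<bar>a\<bar>) > 0" by simp
  have "?defects / (2 * (1 + \<bar>a\<bar>)) \<le> hdist_set (x,y,t) (hline a b c)"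
    unfolding hdist_set_def
  proof (rule cINF_greatest)
    show "hline a b c \<noteq> {}" unfolding hline_def by simp
  next
    fix q assume "q \<in> hline a b c"
    then show "?defects / (2 * (1 + \<bar>a\<bar>)) \<le> hdist (x,y,t) q"
      using defects_le_hdist_line_point K by (simp add: divide_le_eq mult.commute)
  qed
  then show "?defects \<le> 2 * (1 + \<bar>a\<bar>) * hdist_set (x,y,t) (hline a b c)"
    using K by (simp add: divide_le_eq mult.commute)
qed

end
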